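(* Let $\mathbb F$ be any field. The problem of classifying pairs $(A,B)$ of commuting $n\times n$ matrices over $\mathbb F$ ($n=1,2,\dots$) up to weak similarity is wild. Moreover, if $\mathbb F$ is not the field with two elements, then the problem of classifying up to weak similarity those pairs $(A,B)$ of commuting matrices over $\mathbb F$ for which $\alpha A+\beta B$ is nonsingular for some $\alpha,\beta\in\mathbb F$ is also wild.
   Context: Two pairs $(A,B)$ and $(A',B')$ of $n\times n$ matrices over $\mathbb F$ are weakly similar if $(A',B')=(S^{-1}(\alpha A+\beta B)S,\;S^{-1}(\gamma A+\delta B)S)$ for some nonsingular $S\in\mathbb F^{n\times n}$ and some nonsingular $\begin{bmatrix}\alpha&\beta\\ \gamma&\delta\end{bmatrix}\in\mathbb F^{2\times 2}$. Two pairs $(M,N)$, $(M',N')$ are similar if $(S^{-1}MS,S^{-1}NS)=(M',N')$ for some nonsingular $S$. A matrix classification problem $\mathcal M$ is given by a set $\mathcal M_1$ of tuples of matrices and a set $\mathcal M_2$ of admissible transformations. It is wild if there is a tuple $M(x,y)=(M_1(x,y),\dots,M_t(x,y))$ of matrices whose entries are noncommutative polynomials in $x,y$ over $\mathbb F$ such that (i) $M(A,B)\in\mathcal M_1$ for all $A,B\in\mathbb F^{n\times n}$, $n\ge 1$ (scalar entries $\alpha$ replaced by $\alpha I_n$), and (ii) $M(A,B)$ is carried to $M(A',B')$ by transformations from $\mathcal M_2$ iff $(A,B)$ and $(A',B')$ are similar. *)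

theory Defs
  imports "Jordan_Normal_Form.Determinant"
begin

text \<open>Noncommutative polynomials in x, y over a field: finitely supported
  coefficient functions on words over the alphabet {x, y}; a word is a
  bool list, True standing for x and False for y.\<close>
type_synonym 'a ncpoly = "bool list \<Rightarrow> 'a"

definition ncpoly :: "'a::zero ncpoly \<Rightarrow> bool" where
  "ncpoly p \<longleftrightarrow> finite {w. p w \<noteq> 0}"

fun word_eval :: "nat \<Rightarrow> 'a::field mat \<Rightarrow> 'a mat \<Rightarrow> bool list \<Rightarrow> 'a mat" where
  "word_eval n A B [] = 1\<^sub>m n"
| "word_eval n A B (b # w) = (if b then A else B) * word_eval n A B w"

definition ncpoly_eval :: "nat \<Rightarrow> 'a::field ncpoly \<Rightarrow> 'a mat \<Rightarrow> 'a mat \<Rightarrow> 'a mat" where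
  "ncpoly_eval n p A B =
     mat n n (\<lambda>(i,j). \<Sum>w\<in>{w. p w \<noteq> 0}. p w * (word_eval n A B w $$ (i,j)))"

text \<open>A matrix of noncommutative polynomials evaluated at (A,B), A,B of size n:
  the block matrix whose (k,l) block is the evaluation of the (k,l) entry.\<close>
definition polymat_eval :: "nat \<Rightarrow> 'a::field ncpoly mat \<Rightarrow> 'a mat \<Rightarrow> 'a mat \<Rightarrow> 'a mat" where
  "polymat_eval n P A B =
     mat (dim_row P * n) (dim_col P * n)
       (\<lambda>(i,j). ncpoly_eval n (P $$ (i div n, j div n)) A B $$ (i mod n, j mod n))"

definition tuple_eval :: "nat \<Rightarrow> 'a::field ncpoly mat list \<Rightarrow> 'a mat \<Rightarrow> 'a mat \<Rightarrow> 'a mat list" where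
  "tuple_eval n Ms A B = map (\<lambda>P. polymat_eval n P A B) Ms"

definition similar_pair :: "'a::field mat \<Rightarrow> 'a mat \<Rightarrow> 'a mat \<Rightarrow> 'a mat \<Rightarrow> bool" where
  "similar_pair M N M' N' \<longleftrightarrow>
     (\<exists>n S Si. M \<in> carrier_mat n n \<and> N \<in> carrier_mat n n \<and> M' \<in> carrier_mat n n \<and>
        N' \<in> carrier_mat n n \<and> S \<in> carrier_mat n n \<and> Si \<in> carrier_mat n n \<and>
        S * Si = 1\<^sub>m n \<and> Si * S = 1\<^sub>m n \<and> Si * M * S = M' \<and> Si * N * S = N')"

definition weakly_similar :: "'a::field mat \<Rightarrow> 'a mat \<Rightarrow> 'a mat \<Rightarrow> 'a mat \<Rightarrow> bool" where
  "weakly_similar A B A' B' \<longleftrightarrow>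
     (\<exists>n S Si \<alpha> \<beta> \<gamma> \<delta>. A \<in> carrier_mat n n \<and> B \<in> carrier_mat n n \<and> A' \<in> carrier_mat n n \<and>
        B' \<in> carrier_mat n n \<and> S \<in> carrier_mat n n \<and> Si \<in> carrier_mat n n \<and>
        S * Si = 1\<^sub>m n \<and> Si * S = 1\<^sub>m n \<and> \<alpha> * \<delta> - \<beta> * \<gamma> \<noteq> 0 \<and>
        A' = Si * (\<alpha> \<cdot>\<^sub>m A + \<beta> \<cdot>\<^sub>m B) * S \<and> B' = Si * (\<gamma> \<cdot>\<^sub>m A + \<delta> \<cdot>\<^sub>m B) * S)"

text \<open>A matrix classification problem: a set M1 of tuples (lists) of matrices and
  the admissible transformations, given as the relation "the first tuple is carried
  to the second by admissible transformations".\<close>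
definition wild :: "'a::field mat list set \<Rightarrow> ('a mat list \<Rightarrow> 'a mat list \<Rightarrow> bool) \<Rightarrow> bool" where
  "wild M1 M2 \<longleftrightarrow>
     (\<exists>Ms :: 'a ncpoly mat list.
        (\<forall>P\<in>set Ms. \<forall>i<dim_row P. \<forall>j<dim_col P. ncpoly (P $$ (i,j))) \<and>
        (\<forall>n A B. n \<ge> 1 \<longrightarrow> A \<in> carrier_mat n n \<longrightarrow> B \<in> carrier_mat n n \<longrightarrow>
            tuple_eval n Ms A B \<in> M1) \<and>
        (\<forall>n n' A B A' B'. n \<ge> 1 \<longrightarrow> n' \<ge> 1 \<longrightarrow>
            A \<in> carrier_mat n n \<longrightarrow> B \<in> carrier_mat n n \<longrightarrow>
            A' \<in> carrier_mat n' n' \<longrightarrow> B' \<in> carrier_mat n' n' \<longrightarrow>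
            (M2 (tuple_eval n Ms A B) (tuple_eval n' Ms A' B') \<longleftrightarrow> similar_pair A B A' B')))"

definition weak_sim_transf :: "'a::field mat list \<Rightarrow> 'a mat list \<Rightarrow> bool" where
  "weak_sim_transf X Y \<longleftrightarrow>
     (\<exists>A B A' B'. X = [A, B] \<and> Y = [A', B'] \<and> weakly_similar A B A' B')"

definition commuting_pairs :: "'a::field mat list set" where
  "commuting_pairs = {[A, B] | A B n. n \<ge> 1 \<and> A \<in> carrier_mat n n \<and> B \<in> carrier_mat n n \<and> A * B = B * A}"

definition commuting_pairs_nonsing :: "'a::field mat list set" where
  "commuting_pairs_nonsing = {[A, B] | A B n. n \<ge> 1 \<and> A \<in> carrier_mat n n \<and> B \<in> carrier_mat n n \<and>
      A * B = B * A \<and> (\<exists>\<alpha> \<beta>. invertible_mat (\<alpha> \<cdot>\<^sub>m A + \<beta> \<cdot>\<^sub>m B))}"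

end

theory Submission
  imports Defs
begin

text \<open>
  For n\<times>n matrices X and Y, the matrices A = wild_A n X Y and B = wild_B n X Y are the 5\<times>5 block
  matrices, with blocks of size n indexed from 0,

        [ I 0 0 0 0 ]          [ 0 0 0 0 0 ]
        [ I I 0 0 0 ]          [ 0 0 0 0 0 ]
    A = [ 0 0 I 0 0 ]      B = [ I 0 0 0 0 ]
        [ 0 I Y I 0 ]          [ 0 Y X 0 0 ]
        [ 0 0 0 0 I ]          [ 0 0 0 0 I ]

  They commute, A is unipotent, and conjugating (X, Y) by T conjugates (A, B) by diag(T, ..., T).
  Conversely, every joint eigenvalue of (A, B) is (1, 0) or (1, 1), and the block columns 3 and 4
  realise both. A weak similarity with coefficients \<alpha>, \<beta>, \<gamma>, \<delta> maps joint eigenvalues linearly,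
  which forces \<alpha> = 1, \<beta> = 0 and (\<gamma>, \<delta>) = (0, 1) or (1, -1). The second case, which swaps the
  two eigenvalues, is impossible: in every attached pair, B fixing BV - V forces A to fix V, while
  for the pair (A, A - B) the block column 1 violates this. Hence the weak similarity is a
  similarity S, and the first block rows of S A' = A S and S B' = B S show that the (0, 0) block T
  of S satisfies T X' = X T and T Y' = Y T, with inverse the (0, 0) block of S\<inverse>.
\<close>

section \<open>Matrix algebra\<close>

lemma smult_one_mat[simp]: "1 \<cdot>\<^sub>m (M :: 'a::monoid_mult mat) = M"
  by (rule eq_matI) auto

lemma zero_smult_mat[simp]: "0 \<cdot>\<^sub>m (M :: 'a::mult_zero mat) = 0\<^sub>m (dim_row M) (dim_col M)"
  by (rule eq_matI) auto

lemma add_zero_right_mat[simp]: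
  "dim_row (A :: 'a::monoid_add mat) = r \<Longrightarrow> dim_col A = c \<Longrightarrow> A + 0\<^sub>m r c = A"
  by (rule eq_matI) auto

lemma add_zero_left_mat[simp]:
  "dim_row (A :: 'a::monoid_add mat) = r \<Longrightarrow> dim_col A = c \<Longrightarrow> 0\<^sub>m r c + A = A"
  by (rule eq_matI) auto

lemma minus_zero_right_mat[simp]:
  "dim_row (A :: 'a::group_add mat) = r \<Longrightarrow> dim_col A = c \<Longrightarrow> A - 0\<^sub>m r c = A"
  by (rule eq_matI) auto

lemma add_eq_self_imp_zero_mat:
  assumes A: "(A :: 'a::ab_group_add mat) \<in> carrier_mat r c" and B: "B \<in> carrier_mat r c"
    and eq: "A + B = A"
  shows "B = 0\<^sub>m r c"
proof (rule eq_matI)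
  fix i j assume "i < dim_row (0\<^sub>m r c :: 'a mat)" "j < dim_col (0\<^sub>m r c :: 'a mat)"
  moreover from eq have "(A + B) $$ (i,j) = A $$ (i,j)" by simp
  ultimately show "B $$ (i,j) = 0\<^sub>m r c $$ (i,j)" using A B by simp
qed (use B in auto)

lemma add_eq_add_commute_imp_eq_mat:
  assumes A: "(A :: 'a::ab_group_add mat) \<in> carrier_mat r c" and B: "B \<in> carrier_mat r c"
    and C: "C \<in> carrier_mat r c" and eq: "A + B = C + A"
  shows "B = C"
proof (rule eq_matI)
  fix i j assume "i < dim_row C" "j < dim_col C"
  moreover from eq have "(A + B) $$ (i,j) = (C + A) $$ (i,j)" by simp
  ultimately show "B $$ (i,j) = C $$ (i,j)" using A B C by simp
qed (use B C in auto)

lemma zero_minus_eq_zero_imp_zero_mat: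
  assumes M: "(M :: 'a::group_add mat) \<in> carrier_mat r c" and eq: "0\<^sub>m r c - M = 0\<^sub>m r c"
  shows "M = 0\<^sub>m r c"
proof (rule eq_matI)
  fix i j assume "i < dim_row (0\<^sub>m r c :: 'a mat)" "j < dim_col (0\<^sub>m r c :: 'a mat)"
  moreover from eq have "(0\<^sub>m r c - M) $$ (i,j) = 0\<^sub>m r c $$ (i,j)" by simp
  ultimately show "M $$ (i,j) = 0\<^sub>m r c $$ (i,j)" using M by simp
qed (use M in auto)

lemma smult_eq_self_imp_zero_mat:
  assumes M: "(M :: 'a::idom mat) \<in> carrier_mat r c" and eq: "M = k \<cdot>\<^sub>m M" and k: "k \<noteq> 1"
  shows "M = 0\<^sub>m r c"
proof (rule eq_matI)
  fix i j assume ij: "i < dim_row (0\<^sub>m r c :: 'a mat)" "j < dim_col (0\<^sub>m r c :: 'a mat)"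
  moreover from eq have "M $$ (i,j) = (k \<cdot>\<^sub>m M) $$ (i,j)" by simp
  ultimately have "(1 - k) * M $$ (i,j) = 0" using M by (simp add: algebra_simps)
  then show "M $$ (i,j) = 0\<^sub>m r c $$ (i,j)" using k ij by simp
qed (use M in auto)

lemma zero_eq_smult_imp_zero_mat:
  assumes M: "(M :: 'a::idom mat) \<in> carrier_mat r c" and eq: "0\<^sub>m r c = k \<cdot>\<^sub>m M" and k: "k \<noteq> 0"
  shows "M = 0\<^sub>m r c"
proof (rule eq_matI)
  fix i j assume ij: "i < dim_row (0\<^sub>m r c :: 'a mat)" "j < dim_col (0\<^sub>m r c :: 'a mat)"
  moreover from eq have "0\<^sub>m r c $$ (i,j) = (k \<cdot>\<^sub>m M) $$ (i,j)" by simp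
  ultimately have "k * M $$ (i,j) = 0" using M by simp
  then show "M $$ (i,j) = 0\<^sub>m r c $$ (i,j)" using k ij by simp
qed (use M in auto)

lemma conj_mult_conj:
  fixes S Si M W :: "'a::semiring_1 mat"
  assumes S: "S \<in> carrier_mat m m" and Si: "Si \<in> carrier_mat m m" and inv: "S * Si = 1\<^sub>m m"
    and M: "M \<in> carrier_mat m m" and W: "W \<in> carrier_mat m k"
  shows "(Si * M * S) * (Si * W) = Si * (M * W)"
proof -
  have "(Si * M * S) * (Si * W) = (Si * M) * ((S * Si) * W)"
    using S Si M W by (simp add: assoc_mult_mat[of _ m m _ m _ k])
  then show ?thesis using Si M W inv by (simp add: assoc_mult_mat[of _ m m _ m _ k] left_mult_one_mat)
qed

lemma conj_intertwines:
  fixes S Si M :: "'a::semiring_1 mat"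
  assumes S: "S \<in> carrier_mat m m" and Si: "Si \<in> carrier_mat m m"
    and inv: "S * Si = 1\<^sub>m m" and M: "M \<in> carrier_mat m m"
  shows "S * (Si * M * S) = M * S" "(Si * M * S) * Si = Si * M"
proof -
  have "S * (Si * M * S) = (S * Si) * (M * S)"
    using S Si M by (simp add: assoc_mult_mat[of _ m m _ m _ m])
  then show "S * (Si * M * S) = M * S" using inv M S by (simp add: left_mult_one_mat)
  have "(Si * M * S) * Si = (Si * M) * (S * Si)"
    using S Si M by (simp add: assoc_mult_mat[of _ m m _ m _ m])
  then show "(Si * M * S) * Si = Si * M" using inv M Si by (simp add: right_mult_one_mat)
qed

lemma conj_eq_if_intertwines:
  fixes T Ti X X' :: "'a::semiring_1 mat"
  assumes T: "T \<in> carrier_mat n n" and Ti: "Ti \<in> carrier_mat n n" and inv: "Ti * T = 1\<^sub>m n"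
    and X: "X \<in> carrier_mat n n" and X': "X' \<in> carrier_mat n n" and intertwines: "T * X' = X * T"
  shows "Ti * X * T = X'"
proof -
  have "Ti * X * T = Ti * (T * X')" using Ti X T by (simp add: intertwines)
  also have "\<dots> = X'" using T Ti X' inv by (simp add: assoc_mult_mat[of _ n n _ n _ n, symmetric])
  finally show ?thesis .
qed

lemma inverse_mult_cancel_mat:
  fixes S Si V W :: "'a::semiring_1 mat"
  assumes S: "S \<in> carrier_mat m m" and Si: "Si \<in> carrier_mat m m" and inv: "S * Si = 1\<^sub>m m"
    and V: "V \<in> carrier_mat m k" and W: "W \<in> carrier_mat m k" and eq: "Si * V = Si * W"
  shows "V = W"
proof -
  have "V = S * (Si * V)"
    using S Si V inv by (simp add: assoc_mult_mat[of _ m m _ m _ k, symmetric] left_mult_one_mat)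
  also have "\<dots> = S * (Si * W)" unfolding eq ..
  also have "\<dots> = W"
    using S Si W inv by (simp add: assoc_mult_mat[of _ m m _ m _ k, symmetric] left_mult_one_mat)
  finally show ?thesis .
qed

lemma conj_lincomb_eigenvector:
  fixes S Si A B V :: "'a::comm_ring_1 mat"
  assumes S: "S \<in> carrier_mat m m" and Si: "Si \<in> carrier_mat m m" and inv: "S * Si = 1\<^sub>m m"
    and A: "A \<in> carrier_mat m m" and B: "B \<in> carrier_mat m m" and V: "V \<in> carrier_mat m k"
    and eigA: "A * V = \<rho> \<cdot>\<^sub>m V" and eigB: "B * V = \<sigma> \<cdot>\<^sub>m V"
  shows "(Si * (a \<cdot>\<^sub>m A + b \<cdot>\<^sub>m B) * S) * (Si * V) = (a * \<rho> + b * \<sigma>) \<cdot>\<^sub>m (Si * V)"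
proof -
  have "(a \<cdot>\<^sub>m A + b \<cdot>\<^sub>m B) * V = a \<cdot>\<^sub>m (A * V) + b \<cdot>\<^sub>m (B * V)"
    using A B V by (simp add: add_mult_distrib_mat[of _ m m _ V k] mult_smult_assoc_mat[OF A V]
        mult_smult_assoc_mat[OF B V])
  also have "\<dots> = (a * \<rho> + b * \<sigma>) \<cdot>\<^sub>m V"
    unfolding eigA eigB using V by (intro eq_matI) (auto simp: algebra_simps)
  finally show ?thesis
    using conj_mult_conj[OF S Si inv _ V] mult_smult_distrib[OF Si V] A B by simp
qed

lemma lower_unitriangular_invertible_mat:
  assumes A: "(A :: 'a::field mat) \<in> carrier_mat n n"
    and upper: "\<And>i j. i < j \<Longrightarrow> j < n \<Longrightarrow> A $$ (i,j) = 0"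
    and diag: "\<And>i. i < n \<Longrightarrow> A $$ (i,i) = 1"
  shows "invertible_mat A"
proof -
  have "det A = prod_list (diag_mat A)"
    by (rule det_lower_triangular[OF upper A])
  also have "diag_mat A = replicate n 1"
    using A diag by (intro nth_equalityI) (auto simp: diag_mat_def)
  finally have "det A \<noteq> 0" by simp
  from det_non_zero_imp_unit[OF A this, of undefined]
  obtain B where "B \<in> carrier_mat n n" "B * A = 1\<^sub>m n" "A * B = 1\<^sub>m n"
    unfolding Units_def ring_mat_simps by auto
  then show ?thesis using A unfolding invertible_mat_def inverts_mat_def by auto
qed

lemma similar_pair_imp_weakly_similar:
  fixes A B A' B' :: "'a::field mat"
  assumes "similar_pair A B A' B'"
  shows "weakly_similar A B A' B'"
proof -
  obtain n S Si where A: "A \<in> carrier_mat n n" and B: "B \<in> carrier_mat n n"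
    and "A' \<in> carrier_mat n n" "B' \<in> carrier_mat n n" "S \<in> carrier_mat n n" "Si \<in> carrier_mat n n"
      "S * Si = 1\<^sub>m n" "Si * S = 1\<^sub>m n" "Si * A * S = A'" "Si * B * S = B'"
    using assms unfolding similar_pair_def by blast
  moreover have "A = 1 \<cdot>\<^sub>m A + 0 \<cdot>\<^sub>m B" "B = 0 \<cdot>\<^sub>m A + 1 \<cdot>\<^sub>m B" using A B by simp_all
  moreover have "1 * 1 - 0 * 0 \<noteq> (0::'a)" by simp
  ultimately show ?thesis unfolding weakly_similar_def by metis
qed

section \<open>Block matrices\<close>

definition block :: "nat \<Rightarrow> 'a mat \<Rightarrow> nat \<Rightarrow> nat \<Rightarrow> 'a mat" where
  "block n M p q = mat n n (\<lambda>(i,j). M $$ (p*n+i, q*n+j))"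

lemma block_carrier[simp]: "block n M p q \<in> carrier_mat n n"
  by (simp add: block_def)

lemma dim_block[simp]: "dim_row (block n M p q) = n" "dim_col (block n M p q) = n"
  by (simp_all add: block_def)

lemma index_block[simp]: "i < n \<Longrightarrow> j < n \<Longrightarrow> block n M p q $$ (i,j) = M $$ (p*n+i, q*n+j)"
  by (simp add: block_def)

lemma block_index_less: "p < a \<Longrightarrow> i < (n::nat) \<Longrightarrow> p*n+i < a*n"
proof -
  assume "p < a" "i < n"
  then have "p*n+i < (p+1)*n" by simp
  also have "\<dots> \<le> a*n" using \<open>p < a\<close> by (intro mult_le_mono1) simp
  finally show ?thesis .
qed

lemma block_index_div[simp]: "i < n \<Longrightarrow> (p*n+i) div n = (p::nat)"
  by (simp add: add.commute)

lemma block_index_mod[simp]: "i < n \<Longrightarrow> (p*n+i) mod n = (i::nat)"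
  by (simp add: add.commute)

lemma block_index_eq_iff: "i < n \<Longrightarrow> j < n \<Longrightarrow> (p*n+i = q*n+j) = (p = q \<and> i = (j::nat))"
  by (metis block_index_div block_index_mod)

lemma index_mat_via_block: "0 < n \<Longrightarrow> M $$ (i,j) = block n M (i div n) (j div n) $$ (i mod n, j mod n)"
  by (simp add: mult.commute[of _ n])

lemma mat_eq_blockI:
  assumes M: "M \<in> carrier_mat (a*n) (b*n)" and N: "N \<in> carrier_mat (a*n) (b*n)"
    and eq: "\<And>p q. p < a \<Longrightarrow> q < b \<Longrightarrow> block n M p q = block n N p q"
  shows "M = N"
proof (rule eq_matI)
  fix i j assume "i < dim_row N" "j < dim_col N"
  then have i: "i < a*n" and j: "j < b*n" using N by auto
  then have n: "0 < n" by (cases n) auto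
  have "i div n < a" "j div n < b" using i j n by (simp_all add: less_mult_imp_div_less)
  then show "M $$ (i,j) = N $$ (i,j)"
    using eq index_mat_via_block[OF n] by metis
qed (use M N in auto)

lemma index_block_mult:
  assumes M: "M \<in> carrier_mat (a*n) (k*n)" and N: "N \<in> carrier_mat (k*n) (b*n)"
    and "p < a" "q < b" "i < n" "j < n"
  shows "block n (M * N) p q $$ (i,j) = (\<Sum>r<k. (block n M p r * block n N r q) $$ (i,j))"
proof -
  let ?f = "\<lambda>l. M $$ (p*n+i, l) * N $$ (l, q*n+j)"
  have "block n (M * N) p q $$ (i,j) = (\<Sum>l<k*n. ?f l)"
    using assms by (simp add: block_index_less scalar_prod_def atLeast0LessThan)
  also have "\<dots> = (\<Sum>r<k. \<Sum>l\<in>{r*n..<r*n+n}. ?f l)"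
    by (rule sum.nat_group[symmetric])
  also have "\<dots> = (\<Sum>r<k. (block n M p r * block n N r q) $$ (i,j))"
  proof (rule sum.cong[OF refl])
    fix r
    show "(\<Sum>l\<in>{r*n..<r*n+n}. ?f l) = (block n M p r * block n N r q) $$ (i,j)"
      using assms sum.shift_bounds_nat_ivl[of ?f 0 "r*n" n]
      by (simp add: scalar_prod_def atLeast0LessThan add.commute)
  qed
  finally show ?thesis .
qed

lemma block_add:
  "M \<in> carrier_mat r c \<Longrightarrow> N \<in> carrier_mat r c \<Longrightarrow> p < a \<Longrightarrow> q < b
   \<Longrightarrow> r = a*n \<Longrightarrow> c = b*n \<Longrightarrow> block n (M + N) p q = block n M p q + block n N p q"
  by (rule eq_matI) (auto simp: block_index_less)

lemma block_minus:
  "M \<in> carrier_mat r c \<Longrightarrow> N \<in> carrier_mat r c \<Longrightarrow> p < a \<Longrightarrow> q < b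
   \<Longrightarrow> r = a*n \<Longrightarrow> c = b*n \<Longrightarrow> block n (M - N) p q = block n M p q - block n N p q"
  by (rule eq_matI) (auto simp: block_index_less)

lemma block_smult:
  "M \<in> carrier_mat r c \<Longrightarrow> p < a \<Longrightarrow> q < b \<Longrightarrow> r = a*n \<Longrightarrow> c = b*n
   \<Longrightarrow> block n (k \<cdot>\<^sub>m M) p q = k \<cdot>\<^sub>m block n M p q"
  by (rule eq_matI) (auto simp: block_index_less)

lemma block_zero_col[simp]: "p < a \<Longrightarrow> block n (0\<^sub>m (a*n) n) p 0 = 0\<^sub>m n n"
  by (rule eq_matI) (auto simp: block_index_less)

lemma block_one[simp]:
  "p < a \<Longrightarrow> q < a \<Longrightarrow> block n (1\<^sub>m (a*n)) p q = (if p = q then 1\<^sub>m n else 0\<^sub>m n n)"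
  by (rule eq_matI) (auto simp: block_index_less block_index_eq_iff)

lemma less_5_cases: "(p::nat) < 5 \<Longrightarrow> p = 0 \<or> p = 1 \<or> p = 2 \<or> p = 3 \<or> p = 4"
  by auto

lemma mat_eq_block_5I:
  assumes "M \<in> carrier_mat (5*n) (5*n)" "N \<in> carrier_mat (5*n) (5*n)"
    and "\<And>q. q < 5 \<Longrightarrow> block n M 0 q = block n N 0 q"
        "\<And>q. q < 5 \<Longrightarrow> block n M 1 q = block n N 1 q"
        "\<And>q. q < 5 \<Longrightarrow> block n M 2 q = block n N 2 q"
        "\<And>q. q < 5 \<Longrightarrow> block n M 3 q = block n N 3 q"
        "\<And>q. q < 5 \<Longrightarrow> block n M 4 q = block n N 4 q"
  shows "M = N"
  by (rule mat_eq_blockI[of M 5 n 5 N]) (use assms in \<open>auto dest!: less_5_cases\<close>)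

lemma mat_eq_block_col_5I:
  assumes "M \<in> carrier_mat (5*n) n" "N \<in> carrier_mat (5*n) n"
    and "block n M 0 0 = block n N 0 0" "block n M 1 0 = block n N 1 0"
        "block n M 2 0 = block n N 2 0" "block n M 3 0 = block n N 3 0"
        "block n M 4 0 = block n N 4 0"
  shows "M = N"
  by (rule mat_eq_blockI[of M 5 n 1 N]) (use assms in \<open>auto dest!: less_5_cases\<close>)

lemma block_mult_5:
  assumes "M \<in> carrier_mat (a*n) (5*n)" "N \<in> carrier_mat (5*n) (b*n)" "p < a" "q < b"
  shows "block n (M * N) p q = block n M p 0 * block n N 0 q + block n M p 1 * block n N 1 q
     + block n M p 2 * block n N 2 q + block n M p 3 * block n N 3 q + block n M p 4 * block n N 4 q"
    (is "_ = ?R")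
proof (rule eq_matI)
  fix i j assume "i < dim_row ?R" "j < dim_col ?R"
  then have "i < n" "j < n" by auto
  have five: "\<And>g. (\<Sum>r<5::nat. g r) = g 0 + g 1 + g 2 + g 3 + g 4"
    by (simp add: eval_nat_numeral)
  show "block n (M * N) p q $$ (i,j) = ?R $$ (i,j)"
    unfolding index_block_mult[OF assms \<open>i < n\<close> \<open>j < n\<close>] five
    using \<open>i < n\<close> \<open>j < n\<close> by simp
qed auto

lemma block_mult_col_5:
  assumes "M \<in> carrier_mat (5*n) (5*n)" "V \<in> carrier_mat (5*n) n" "p < 5"
  shows "block n (M * V) p 0 = block n M p 0 * block n V 0 0 + block n M p 1 * block n V 1 0
     + block n M p 2 * block n V 2 0 + block n M p 3 * block n V 3 0 + block n M p 4 * block n V 4 0"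
  using assms by (intro block_mult_5[where b=1]) simp_all

lemma block_add_col[simp]:
  "M \<in> carrier_mat (5*n) n \<Longrightarrow> N \<in> carrier_mat (5*n) n \<Longrightarrow> p < 5
   \<Longrightarrow> block n (M + N) p 0 = block n M p 0 + block n N p 0"
  by (rule block_add[where a=5 and b=1]) auto

lemma block_minus_col[simp]:
  "M \<in> carrier_mat (5*n) n \<Longrightarrow> N \<in> carrier_mat (5*n) n \<Longrightarrow> p < 5
   \<Longrightarrow> block n (M - N) p 0 = block n M p 0 - block n N p 0"
  by (rule block_minus[where a=5 and b=1]) auto

lemma block_smult_col[simp]:
  "M \<in> carrier_mat (5*n) n \<Longrightarrow> p < 5 \<Longrightarrow> block n (k \<cdot>\<^sub>m M) p 0 = k \<cdot>\<^sub>m block n M p 0"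
  by (rule block_smult[where a=5 and b=1]) auto

definition unit_block_col :: "nat \<Rightarrow> nat \<Rightarrow> 'a::field mat" where
  "unit_block_col n p = mat (5*n) n (\<lambda>(i,j). if i div n = p \<and> i mod n = j then 1 else 0)"

lemma dim_unit_block_col[simp]:
  "dim_row (unit_block_col n p) = 5*n" "dim_col (unit_block_col n p) = n"
  by (simp_all add: unit_block_col_def)

lemma unit_block_col_carrier[simp]: "unit_block_col n p \<in> carrier_mat (5*n) n"
  by (simp add: carrier_matI)

lemma block_unit_block_col[simp]:
  "r < 5 \<Longrightarrow> block n (unit_block_col n p) r 0 = (if r = p then 1\<^sub>m n else 0\<^sub>m n n)"
  by (rule eq_matI) (auto simp: unit_block_col_def block_index_less)

lemma unit_block_col_nonzero:
  assumes "0 < n" "p < 5" shows "unit_block_col n p \<noteq> (0\<^sub>m (5*n) n :: 'a::field mat)"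
proof
  assume "unit_block_col n p = (0\<^sub>m (5*n) n :: 'a mat)"
  then have "block n (unit_block_col n p) p 0 = (block n (0\<^sub>m (5*n) n) p 0 :: 'a mat)" by simp
  then have "1\<^sub>m n = (0\<^sub>m n n :: 'a mat)" using assms by simp
  then show False using assms by (metis index_one_mat(1) index_zero_mat(1) zero_neq_one)
qed

definition diag_block_5 :: "nat \<Rightarrow> 'a::field mat \<Rightarrow> 'a mat" where
  "diag_block_5 n T =
     mat (5*n) (5*n) (\<lambda>(i,j). if i div n = j div n then T $$ (i mod n, j mod n) else 0)"

lemma diag_block_5_carrier[simp]: "diag_block_5 n T \<in> carrier_mat (5*n) (5*n)"
  by (simp add: diag_block_5_def)

lemma block_diag_block_5[simp]:
  "T \<in> carrier_mat n n \<Longrightarrow> p < 5 \<Longrightarrow> q < 5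
   \<Longrightarrow> block n (diag_block_5 n T) p q = (if p = q then T else 0\<^sub>m n n)"
  by (rule eq_matI) (auto simp: diag_block_5_def block_index_less)

lemma diag_block_5_mult_inverse:
  assumes T: "T \<in> carrier_mat n n" and Ti: "Ti \<in> carrier_mat n n" and inv: "T * Ti = 1\<^sub>m n"
  shows "diag_block_5 n T * diag_block_5 n Ti = 1\<^sub>m (5*n)"
  by (rule mat_eq_block_5I[where n=n]; (elim less_5_cases[elim_format] disjE)?;
      simp add: block_mult_5[OF diag_block_5_carrier diag_block_5_carrier]
        mult_carrier_mat[OF diag_block_5_carrier diag_block_5_carrier]
        carrier_matD[OF T] carrier_matD[OF Ti] T Ti inv)

lemma block_conj_diag_block_5:
  assumes T: "T \<in> carrier_mat n n" and Ti: "Ti \<in> carrier_mat n n"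
    and M: "M \<in> carrier_mat (5*n) (5*n)" and p: "p < 5" and q: "q < 5"
  shows "block n (diag_block_5 n Ti * M * diag_block_5 n T) p q = Ti * block n M p q * T"
  using T Ti less_5_cases[OF p] less_5_cases[OF q]
  by (elim disjE) (simp_all add: block_mult_5[OF diag_block_5_carrier M]
      block_mult_5[OF mult_carrier_mat[OF diag_block_5_carrier M] diag_block_5_carrier])

definition ncmonom :: "'a::zero \<Rightarrow> bool list \<Rightarrow> 'a ncpoly" where
  "ncmonom c v = (\<lambda>w. if w = v then c else 0)"

lemma ncpoly_ncmonom: "ncpoly (ncmonom c v)"
  unfolding ncpoly_def ncmonom_def by (rule finite_subset[of _ "{v}"]) auto

lemma word_eval_carrier[simp]:
  "X \<in> carrier_mat n n \<Longrightarrow> Y \<in> carrier_mat n n \<Longrightarrow> word_eval n X Y w \<in> carrier_mat n n"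
  by (induction w) auto

lemma ncpoly_eval_ncmonom:
  assumes "X \<in> carrier_mat n n" "Y \<in> carrier_mat n n"
  shows "ncpoly_eval n (ncmonom c v) X Y = c \<cdot>\<^sub>m word_eval n X Y v"
proof -
  have W: "word_eval n X Y v \<in> carrier_mat n n" using assms by simp
  show ?thesis
  proof (cases "c = 0")
    case True
    then have "{w. ncmonom c v w \<noteq> 0} = {}" by (auto simp: ncmonom_def)
    then show ?thesis using W True unfolding ncpoly_eval_def by (intro eq_matI) auto
  next
    case False
    then have "{w. ncmonom c v w \<noteq> 0} = {v}" by (auto simp: ncmonom_def)
    then show ?thesis using W unfolding ncpoly_eval_def by (intro eq_matI) (auto simp: ncmonom_def)
  qed
qed

section \<open>The commuting pair attached to two matrices\<close>

definition wild_A_poly :: "'a::field ncpoly mat" where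
  "wild_A_poly = mat 5 5 (\<lambda>(p,q).
     if p = q \<or> (p,q) = (1,0) \<or> (p,q) = (3,1) then ncmonom 1 []
     else if (p,q) = (3,2) then ncmonom 1 [False] else ncmonom 0 [])"

definition wild_B_poly :: "'a::field ncpoly mat" where
  "wild_B_poly = mat 5 5 (\<lambda>(p,q).
     if (p,q) = (2,0) \<or> (p,q) = (4,4) then ncmonom 1 []
     else if (p,q) = (3,1) then ncmonom 1 [False]
     else if (p,q) = (3,2) then ncmonom 1 [True] else ncmonom 0 [])"

definition wild_A :: "nat \<Rightarrow> 'a::field mat \<Rightarrow> 'a mat \<Rightarrow> 'a mat" where
  "wild_A n X Y = polymat_eval n wild_A_poly X Y"

definition wild_B :: "nat \<Rightarrow> 'a::field mat \<Rightarrow> 'a mat \<Rightarrow> 'a mat" where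
  "wild_B n X Y = polymat_eval n wild_B_poly X Y"

lemma dim_wild[simp]:
  "dim_row (wild_A n X Y) = 5*n" "dim_col (wild_A n X Y) = 5*n"
  "dim_row (wild_B n X Y) = 5*n" "dim_col (wild_B n X Y) = 5*n"
  by (simp_all add: wild_A_def wild_B_def wild_A_poly_def wild_B_poly_def polymat_eval_def)

lemma wild_A_carrier[simp]: "wild_A n X Y \<in> carrier_mat (5*n) (5*n)"
  and wild_B_carrier[simp]: "wild_B n X Y \<in> carrier_mat (5*n) (5*n)"
  by (simp_all add: carrier_matI)

lemma block_polymat_eval:
  assumes "p < dim_row P" "q < dim_col P"
  shows "block n (polymat_eval n P X Y) p q = ncpoly_eval n (P $$ (p,q)) X Y"
  by (rule eq_matI) (use assms in \<open>auto simp: polymat_eval_def ncpoly_eval_def block_index_less\<close>)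

lemma block_wild_A[simp]:
  assumes "X \<in> carrier_mat n n" "Y \<in> carrier_mat n n" "p < 5" "q < 5"
  shows "block n (wild_A n X Y) p q =
    (if p = q \<or> (p,q) = (1,0) \<or> (p,q) = (3,1) then 1\<^sub>m n else if (p,q) = (3,2) then Y else 0\<^sub>m n n)"
  using assms by (simp add: wild_A_def block_polymat_eval wild_A_poly_def ncpoly_eval_ncmonom)

lemma block_wild_B[simp]:
  assumes "X \<in> carrier_mat n n" "Y \<in> carrier_mat n n" "p < 5" "q < 5"
  shows "block n (wild_B n X Y) p q =
    (if (p,q) = (2,0) \<or> (p,q) = (4,4) then 1\<^sub>m n else if (p,q) = (3,1) then Y
     else if (p,q) = (3,2) then X else 0\<^sub>m n n)"
  using assms by (simp add: wild_B_def block_polymat_eval wild_B_poly_def ncpoly_eval_ncmonom)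

lemma wild_A_wild_B_commute:
  assumes X: "X \<in> carrier_mat n n" and Y: "Y \<in> carrier_mat n n"
  shows "wild_A n X Y * wild_B n X Y = wild_B n X Y * wild_A n X Y"
  by (rule mat_eq_block_5I[where n=n]; (elim less_5_cases[elim_format] disjE)?;
      simp add: block_mult_5[OF wild_A_carrier wild_B_carrier] block_mult_5[OF wild_B_carrier wild_A_carrier]
        mult_carrier_mat[OF wild_A_carrier wild_B_carrier] mult_carrier_mat[OF wild_B_carrier wild_A_carrier]
        carrier_matD[OF X] carrier_matD[OF Y] X Y)

lemma wild_A_invertible:
  assumes X: "X \<in> carrier_mat n n" and Y: "Y \<in> carrier_mat n n"
  shows "invertible_mat (wild_A n X Y)"
proof (rule lower_unitriangular_invertible_mat[OF wild_A_carrier])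
  have entry: "wild_A n X Y $$ (i,j) =
      (if i div n = j div n \<or> (i div n, j div n) = (1,0) \<or> (i div n, j div n) = (3,1) then 1\<^sub>m n
       else if (i div n, j div n) = (3,2) then Y else 0\<^sub>m n n) $$ (i mod n, j mod n)"
    if "i < 5*n" "j < 5*n" for i j
  proof -
    have n: "0 < n" using that by (cases n) auto
    then have "i div n < 5" "j div n < 5" using that by (simp_all add: less_mult_imp_div_less)
    then show ?thesis unfolding index_mat_via_block[OF n, of "wild_A n X Y" i j] using n X Y by simp
  qed
  show "wild_A n X Y $$ (i,j) = 0" if "i < j" "j < 5*n" for i j
  proof -
    have n: "0 < n" using that by (cases n) auto
    have "i div n \<le> j div n" using \<open>i < j\<close> by (simp add: div_le_mono)
    moreover have "i mod n \<noteq> j mod n" if "i div n = j div n"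
      using \<open>i < j\<close> that by (metis div_mult_mod_eq less_irrefl)
    ultimately show ?thesis using entry[of i j] that n Y by auto
  qed
  show "wild_A n X Y $$ (i,i) = 1" if "i < 5*n" for i
    using entry[OF that that] that by (cases n) auto
qed

lemma block_wild_A_mult_col:
  assumes X: "X \<in> carrier_mat n n" and Y: "Y \<in> carrier_mat n n" and V: "V \<in> carrier_mat (5*n) n"
  shows "block n (wild_A n X Y * V) 0 0 = block n V 0 0"
    "block n (wild_A n X Y * V) 1 0 = block n V 0 0 + block n V 1 0"
    "block n (wild_A n X Y * V) 2 0 = block n V 2 0"
    "block n (wild_A n X Y * V) 3 0 = block n V 1 0 + Y * block n V 2 0 + block n V 3 0"
    "block n (wild_A n X Y * V) 4 0 = block n V 4 0"
  using X Y
  by (simp_all add: block_mult_col_5[OF wild_A_carrier V] carrier_matD[OF X] carrier_matD[OF Y])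

lemma block_wild_B_mult_col:
  assumes X: "X \<in> carrier_mat n n" and Y: "Y \<in> carrier_mat n n" and V: "V \<in> carrier_mat (5*n) n"
  shows "block n (wild_B n X Y * V) 0 0 = 0\<^sub>m n n"
    "block n (wild_B n X Y * V) 1 0 = 0\<^sub>m n n"
    "block n (wild_B n X Y * V) 2 0 = block n V 0 0"
    "block n (wild_B n X Y * V) 3 0 = Y * block n V 1 0 + X * block n V 2 0"
    "block n (wild_B n X Y * V) 4 0 = block n V 4 0"
  using X Y
  by (simp_all add: block_mult_col_5[OF wild_B_carrier V] carrier_matD[OF X] carrier_matD[OF Y])

lemma wild_mult_unit_block_col:
  assumes X: "X \<in> carrier_mat n n" and Y: "Y \<in> carrier_mat n n"
  shows "wild_A n X Y * unit_block_col n 1 = unit_block_col n 1 + unit_block_col n 3"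
    "wild_A n X Y * unit_block_col n 3 = unit_block_col n 3"
    "wild_B n X Y * unit_block_col n 3 = 0\<^sub>m (5*n) n"
    "wild_A n X Y * unit_block_col n 4 = unit_block_col n 4"
    "wild_B n X Y * unit_block_col n 4 = unit_block_col n 4"
proof -
  note simps = block_wild_A_mult_col[OF X Y unit_block_col_carrier]
    block_wild_B_mult_col[OF X Y unit_block_col_carrier] carrier_matD[OF X] carrier_matD[OF Y]
    mult_carrier_mat[OF wild_A_carrier unit_block_col_carrier]
    mult_carrier_mat[OF wild_B_carrier unit_block_col_carrier]
  show "wild_A n X Y * unit_block_col n 1 = unit_block_col n 1 + unit_block_col n 3"
    by (rule mat_eq_block_col_5I[where n=n]) (simp_all add: simps del: One_nat_def)
  show "wild_A n X Y * unit_block_col n 3 = unit_block_col n 3"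
    by (rule mat_eq_block_col_5I[where n=n]) (simp_all add: simps del: One_nat_def)
  show "wild_B n X Y * unit_block_col n 3 = 0\<^sub>m (5*n) n"
    by (rule mat_eq_block_col_5I[where n=n]) (simp_all add: simps del: One_nat_def)
  show "wild_A n X Y * unit_block_col n 4 = unit_block_col n 4"
    by (rule mat_eq_block_col_5I[where n=n]) (simp_all add: simps del: One_nat_def)
  show "wild_B n X Y * unit_block_col n 4 = unit_block_col n 4"
    by (rule mat_eq_block_col_5I[where n=n]) (simp_all add: simps del: One_nat_def)
qed

lemma similar_imp_similar_wild:
  assumes X: "X \<in> carrier_mat n n" and Y: "Y \<in> carrier_mat n n"
    and T: "T \<in> carrier_mat n n" and Ti: "Ti \<in> carrier_mat n n"
    and TTi: "T * Ti = 1\<^sub>m n" and TiT: "Ti * T = 1\<^sub>m n"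
  shows "similar_pair (wild_A n X Y) (wild_B n X Y)
           (wild_A n (Ti * X * T) (Ti * Y * T)) (wild_B n (Ti * X * T) (Ti * Y * T))"
proof -
  let ?X' = "Ti * X * T" and ?Y' = "Ti * Y * T"
  have X': "?X' \<in> carrier_mat n n" and Y': "?Y' \<in> carrier_mat n n" using X Y T Ti by simp_all
  have conj_one: "Ti * 1\<^sub>m n * T = 1\<^sub>m n" using TiT Ti by simp
  have conj_zero: "Ti * 0\<^sub>m n n * T = 0\<^sub>m n n" using Ti T by simp
  have conj_carrier: "diag_block_5 n Ti * M * diag_block_5 n T \<in> carrier_mat (5*n) (5*n)"
    if "M \<in> carrier_mat (5*n) (5*n)" for M
    by (rule mult_carrier_mat[OF mult_carrier_mat[OF diag_block_5_carrier that] diag_block_5_carrier])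
  note simps = X Y X' Y' T Ti conj_one conj_zero conj_carrier
  have "diag_block_5 n Ti * wild_A n X Y * diag_block_5 n T = wild_A n ?X' ?Y'"
    by (rule mat_eq_block_5I[where n=n]) (use simps in \<open>simp_all add: block_conj_diag_block_5\<close>)
  moreover have "diag_block_5 n Ti * wild_B n X Y * diag_block_5 n T = wild_B n ?X' ?Y'"
    by (rule mat_eq_block_5I[where n=n]) (use simps in \<open>simp_all add: block_conj_diag_block_5\<close>)
  ultimately show ?thesis
    unfolding similar_pair_def
    using diag_block_5_mult_inverse[OF T Ti TTi] diag_block_5_mult_inverse[OF Ti T TiT]
      diag_block_5_carrier wild_A_carrier wild_B_carrier by metis
qed

section \<open>Weakly similar attached pairs come from similar pairs\<close>

lemma wild_joint_eigenvalues:
  assumes X: "X \<in> carrier_mat n n" and Y: "Y \<in> carrier_mat n n"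
    and V: "V \<in> carrier_mat (5*n) n" and nonzero: "V \<noteq> 0\<^sub>m (5*n) n"
    and eigA: "wild_A n X Y * V = \<rho> \<cdot>\<^sub>m V" and eigB: "wild_B n X Y * V = \<sigma> \<cdot>\<^sub>m V"
  shows "\<rho> = 1 \<and> (\<sigma> = 0 \<or> \<sigma> = 1)"
proof -
  let ?V = "\<lambda>p. block n V p 0"
  have blocks: "\<And>p. ?V p \<in> carrier_mat n n" by simp
  have A: "block n (wild_A n X Y * V) p 0 = \<rho> \<cdot>\<^sub>m ?V p"
    and B: "block n (wild_B n X Y * V) p 0 = \<sigma> \<cdot>\<^sub>m ?V p" if "p < 5" for p
    unfolding eigA eigB using V that by simp_all
  note A_blocks = block_wild_A_mult_col[OF X Y V] and B_blocks = block_wild_B_mult_col[OF X Y V]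
  have all_zero: False
    if "?V 0 = 0\<^sub>m n n" "?V 1 = 0\<^sub>m n n" "?V 2 = 0\<^sub>m n n" "?V 3 = 0\<^sub>m n n" "?V 4 = 0\<^sub>m n n"
    using nonzero mat_eq_block_col_5I[OF V zero_carrier_mat] that by simp
  have "\<rho> = 1"
  proof (rule ccontr)
    assume \<rho>: "\<rho> \<noteq> 1"
    note zero = smult_eq_self_imp_zero_mat[OF blocks _ \<rho>]
    have v0: "?V 0 = 0\<^sub>m n n" using zero A[of 0, unfolded A_blocks] by simp
    have v1: "?V 1 = 0\<^sub>m n n" using zero A[of 1, unfolded A_blocks v0] by simp
    have v2: "?V 2 = 0\<^sub>m n n" using zero A[of 2, unfolded A_blocks] by simp
    have v3: "?V 3 = 0\<^sub>m n n" using zero A[of 3, unfolded A_blocks v1 v2] Y by simp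
    have v4: "?V 4 = 0\<^sub>m n n" using zero A[of 4, unfolded A_blocks] by simp
    show False using all_zero[OF v0 v1 v2 v3 v4] .
  qed
  moreover have "\<sigma> = 0 \<or> \<sigma> = 1"
  proof (rule ccontr)
    assume "\<not> (\<sigma> = 0 \<or> \<sigma> = 1)"
    then have \<sigma>0: "\<sigma> \<noteq> 0" and \<sigma>1: "\<sigma> \<noteq> 1" by auto
    note zero = zero_eq_smult_imp_zero_mat[OF blocks _ \<sigma>0]
    have v0: "?V 0 = 0\<^sub>m n n" using zero B[of 0, unfolded B_blocks] by simp
    have v1: "?V 1 = 0\<^sub>m n n" using zero B[of 1, unfolded B_blocks] by simp
    have v2: "?V 2 = 0\<^sub>m n n" using zero B[of 2, unfolded B_blocks v0] by simp
    have v3: "?V 3 = 0\<^sub>m n n" using zero B[of 3, unfolded B_blocks v1 v2] X Y by simp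
    have v4: "?V 4 = 0\<^sub>m n n"
      using smult_eq_self_imp_zero_mat[OF blocks _ \<sigma>1] B[of 4, unfolded B_blocks] by simp
    show False using all_zero[OF v0 v1 v2 v3 v4] .
  qed
  ultimately show ?thesis ..
qed

lemma wild_A_fixes_if_wild_B_fixes_difference:
  assumes X: "X \<in> carrier_mat n n" and Y: "Y \<in> carrier_mat n n" and V: "V \<in> carrier_mat (5*n) n"
    and fixed: "wild_B n X Y * (wild_B n X Y * V - V) = wild_B n X Y * V - V"
  shows "wild_A n X Y * V = V"
proof -
  define U where "U = wild_B n X Y * V - V"
  let ?V = "\<lambda>p. block n V p 0" and ?U = "\<lambda>p. block n U p 0"
  have blocks: "\<And>p. ?V p \<in> carrier_mat n n" by simp
  have U: "U \<in> carrier_mat (5*n) n" unfolding U_def using V by (rule minus_carrier_mat)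
  have "?U p = block n (wild_B n X Y * V) p 0 - ?V p" if "p < 5" for p
    unfolding U_def using V that mult_carrier_mat[OF wild_B_carrier V] by simp
  note U_blocks = this and U_simps = block_wild_B_mult_col[OF X Y V]
  have "block n (wild_B n X Y * U) p 0 = ?U p" for p
    using fixed unfolding U_def[symmetric] by simp
  note fixed_blocks = this and fixed_simps = block_wild_B_mult_col[OF X Y U]
  have u0: "?U 0 = 0\<^sub>m n n" and u1: "?U 1 = 0\<^sub>m n n" and u2: "?U 2 = 0\<^sub>m n n"
    using fixed_blocks[of 0] fixed_blocks[of 1] fixed_blocks[of 2] unfolding fixed_simps by simp_all
  have u3: "?U 3 = 0\<^sub>m n n" using fixed_blocks[of 3] unfolding fixed_simps u1 u2 using X Y by simp
  note zero = zero_minus_eq_zero_imp_zero_mat[OF blocks]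
  have v0: "?V 0 = 0\<^sub>m n n" using zero U_blocks[of 0, unfolded U_simps] u0 by simp
  have v1: "?V 1 = 0\<^sub>m n n" using zero U_blocks[of 1, unfolded U_simps] u1 by simp
  have v2: "?V 2 = 0\<^sub>m n n" using zero U_blocks[of 2, unfolded U_simps] u2 v0 by simp
  have "0\<^sub>m n n - ?V 3 = 0\<^sub>m n n"
    using U_blocks[of 3, unfolded U_simps] unfolding u3 v1 v2 using X Y by simp
  then have v3: "?V 3 = 0\<^sub>m n n" by (rule zero)
  show ?thesis
    by (rule mat_eq_block_col_5I[OF mult_carrier_mat[OF wild_A_carrier V] V])
      (use v0 v1 v2 v3 Y in \<open>simp_all add: block_wild_A_mult_col[OF X Y V] del: One_nat_def\<close>)
qed

lemma wild_difference_unit_block_col: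
  assumes X: "X \<in> carrier_mat n n" and Y: "Y \<in> carrier_mat n n"
  defines "N \<equiv> wild_A n X Y - wild_B n X Y" and "E \<equiv> unit_block_col n 1"
  shows "N * (N * E - E) = N * E - E"
proof -
  have N: "N \<in> carrier_mat (5*n) (5*n)" unfolding N_def by (rule minus_carrier_mat) simp
  have E: "E \<in> carrier_mat (5*n) n" unfolding E_def by simp
  have W: "N * E - E \<in> carrier_mat (5*n) n" using E by (rule minus_carrier_mat)
  have block_N: "block n N p q = block n (wild_A n X Y) p q - block n (wild_B n X Y) p q"
    if "p < 5" "q < 5" for p q
    unfolding N_def by (rule block_minus[where a=5 and b=5]) (simp_all add: that)
  have block_E: "block n E p 0 = (if p = 1 then 1\<^sub>m n else 0\<^sub>m n n)" if "p < 5" for p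
    unfolding E_def using that by simp
  note simps = block_mult_col_5[OF N E] block_mult_col_5[OF N W] block_N block_E
    carrier_matD[OF X] carrier_matD[OF Y]
  have block_W: "block n (N * E - E) p 0 = (if p = 3 then 1\<^sub>m n - Y else 0\<^sub>m n n)" if "p < 5" for p
    using less_5_cases[OF that] E mult_carrier_mat[OF N E] X Y by (elim disjE) (simp_all add: simps)
  show ?thesis
    by (rule mat_eq_block_col_5I[OF mult_carrier_mat[OF N W] W])
      (use X Y in \<open>simp_all add: simps block_W\<close>)
qed

lemma wild_not_similar_to_swap:
  fixes X Y X' Y' :: "'a::field mat"
  assumes X: "X \<in> carrier_mat n n" and Y: "Y \<in> carrier_mat n n"
    and X': "X' \<in> carrier_mat n n" and Y': "Y' \<in> carrier_mat n n" and n: "0 < n"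
    and S: "S \<in> carrier_mat (5*n) (5*n)" and Si: "Si \<in> carrier_mat (5*n) (5*n)"
    and SSi: "S * Si = 1\<^sub>m (5*n)"
    and hA: "wild_A n X' Y' = Si * wild_A n X Y * S"
    and hB: "wild_B n X' Y' = Si * (wild_A n X Y - wild_B n X Y) * S"
  shows False
proof -
  define N where "N = wild_A n X Y - wild_B n X Y"
  define E :: "'a mat" where "E = unit_block_col n 1"
  define V where "V = Si * E"
  have N: "N \<in> carrier_mat (5*n) (5*n)" unfolding N_def by (rule minus_carrier_mat) simp
  have E: "E \<in> carrier_mat (5*n) n" unfolding E_def by simp
  have V: "V \<in> carrier_mat (5*n) n" unfolding V_def using Si E by simp
  have NE: "N * E - E \<in> carrier_mat (5*n) n" using E by (rule minus_carrier_mat)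
  have transport: "wild_B n X' Y' * (Si * W) = Si * (N * W)" if "W \<in> carrier_mat (5*n) n" for W
    unfolding hB N_def[symmetric] using conj_mult_conj[OF S Si SSi N that] .
  have "wild_B n X' Y' * V - V = Si * (N * E - E)"
    unfolding V_def transport[OF E] using mult_minus_distrib_mat[OF Si mult_carrier_mat[OF N E] E] by simp
  then have "wild_B n X' Y' * (wild_B n X' Y' * V - V) = wild_B n X' Y' * V - V"
    using transport[OF NE] wild_difference_unit_block_col[OF X Y]
    unfolding N_def[symmetric] E_def[symmetric] by simp
  then have "wild_A n X' Y' * V = V"
    by (rule wild_A_fixes_if_wild_B_fixes_difference[OF X' Y' V])
  moreover have "wild_A n X' Y' * V = Si * (E + unit_block_col n 3)"
    unfolding V_def hA conj_mult_conj[OF S Si SSi wild_A_carrier E]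
    unfolding E_def wild_mult_unit_block_col(1)[OF X Y] ..
  ultimately have "Si * (E + unit_block_col n 3) = Si * E" unfolding V_def by simp
  then have "E + unit_block_col n 3 = E"
    by (rule inverse_mult_cancel_mat[OF S Si SSi add_carrier_mat[OF unit_block_col_carrier] E])
  then have "unit_block_col n 3 = (0\<^sub>m (5*n) n :: 'a mat)"
    by (rule add_eq_self_imp_zero_mat[OF E unit_block_col_carrier])
  moreover have "unit_block_col n 3 \<noteq> (0\<^sub>m (5*n) n :: 'a mat)"
    by (rule unit_block_col_nonzero[OF n]) simp
  ultimately show False by contradiction
qed

lemma weakly_similar_wild_coefficients:
  fixes X Y X' Y' :: "'a::field mat"
  assumes X: "X \<in> carrier_mat n n" and Y: "Y \<in> carrier_mat n n"
    and X': "X' \<in> carrier_mat n n" and Y': "Y' \<in> carrier_mat n n" and n: "0 < n"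
    and S: "S \<in> carrier_mat (5*n) (5*n)" and Si: "Si \<in> carrier_mat (5*n) (5*n)"
    and SSi: "S * Si = 1\<^sub>m (5*n)" and det: "a * d - b * c \<noteq> 0"
    and hA: "wild_A n X' Y' = Si * (a \<cdot>\<^sub>m wild_A n X Y + b \<cdot>\<^sub>m wild_B n X Y) * S"
    and hB: "wild_B n X' Y' = Si * (c \<cdot>\<^sub>m wild_A n X Y + d \<cdot>\<^sub>m wild_B n X Y) * S"
  shows "a = 1 \<and> b = 0 \<and> c = 0 \<and> d = 1"
proof -
  let ?E = "unit_block_col n :: nat \<Rightarrow> 'a mat"
  note E = wild_mult_unit_block_col[OF X Y]
  note transport = conj_lincomb_eigenvector[OF S Si SSi wild_A_carrier wild_B_carrier unit_block_col_carrier]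
  have eigenvector: "Si * ?E p \<in> carrier_mat (5*n) n" "Si * ?E p \<noteq> 0\<^sub>m (5*n) n" if "p < 5" for p
    using Si inverse_mult_cancel_mat[OF S Si SSi unit_block_col_carrier zero_carrier_mat]
      unit_block_col_nonzero[OF n that] by auto
  have "wild_A n X' Y' * (Si * ?E 3) = (a * 1 + b * 0) \<cdot>\<^sub>m (Si * ?E 3)"
    "wild_B n X' Y' * (Si * ?E 3) = (c * 1 + d * 0) \<cdot>\<^sub>m (Si * ?E 3)"
    unfolding hA hB by (rule transport; simp add: E)+
  then have "a = 1 \<and> (c = 0 \<or> c = 1)"
    using wild_joint_eigenvalues[OF X' Y' eigenvector[of 3]] by simp
  moreover have "wild_A n X' Y' * (Si * ?E 4) = (a * 1 + b * 1) \<cdot>\<^sub>m (Si * ?E 4)"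
    "wild_B n X' Y' * (Si * ?E 4) = (c * 1 + d * 1) \<cdot>\<^sub>m (Si * ?E 4)"
    unfolding hA hB by (rule transport; simp add: E)+
  then have "a + b = 1 \<and> (c + d = 0 \<or> c + d = 1)"
    using wild_joint_eigenvalues[OF X' Y' eigenvector[of 4]] by simp
  ultimately have a: "a = 1" and b: "b = 0" and cd: "c = 0 \<and> d = 1 \<or> c = 1 \<and> d = -1"
    using det by (auto simp: add_eq_0_iff)
  have "1 \<cdot>\<^sub>m wild_A n X Y + (-1) \<cdot>\<^sub>m wild_B n X Y = wild_A n X Y - wild_B n X Y"
    by (rule eq_matI) auto
  then have "c = 0"
    using cd wild_not_similar_to_swap[OF X Y X' Y' n S Si SSi] hA hB a b by auto
  then show ?thesis using a b cd by simp
qed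

lemma wild_intertwiner_first_block_row:
  assumes X: "X \<in> carrier_mat n n" and Y: "Y \<in> carrier_mat n n"
    and X': "X' \<in> carrier_mat n n" and Y': "Y' \<in> carrier_mat n n"
    and S: "S \<in> carrier_mat (5*n) (5*n)"
    and hA: "S * wild_A n X' Y' = wild_A n X Y * S" and hB: "S * wild_B n X' Y' = wild_B n X Y * S"
  shows "block n S 0 1 = 0\<^sub>m n n" "block n S 0 2 = 0\<^sub>m n n" "block n S 0 3 = 0\<^sub>m n n"
    "block n S 0 4 = 0\<^sub>m n n" "block n S 0 0 * X' = X * block n S 0 0"
    "block n S 0 0 * Y' = Y * block n S 0 0"
proof -
  let ?S = "block n S"
  have blocks: "\<And>p q. ?S p q \<in> carrier_mat n n" by simp
  have "block n (S * wild_A n X' Y') p q = block n (wild_A n X Y * S) p q"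
    "block n (S * wild_B n X' Y') p q = block n (wild_B n X Y * S) p q" for p q
    using hA hB by simp_all
  note eA = this(1) and eB = this(2)
  note simps = block_mult_5[OF S wild_A_carrier] block_mult_5[OF wild_A_carrier S]
    block_mult_5[OF S wild_B_carrier] block_mult_5[OF wild_B_carrier S]
    carrier_matD[OF X] carrier_matD[OF Y] carrier_matD[OF X'] carrier_matD[OF Y'] X Y X' Y'
  have A00: "?S 0 0 + ?S 0 1 = ?S 0 0" using eA[of 0 0] by (simp add: simps)
  have A01: "?S 0 1 + ?S 0 3 = ?S 0 1" using eA[of 0 1] by (simp add: simps)
  have A10: "?S 1 0 + ?S 1 1 = ?S 0 0 + ?S 1 0" using eA[of 1 0] by (simp add: simps)
  have A20: "?S 2 0 + ?S 2 1 = ?S 2 0" using eA[of 2 0] by (simp add: simps)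
  have A31: "?S 3 1 + ?S 3 3 = ?S 1 1 + Y * ?S 2 1 + ?S 3 1" using eA[of 3 1] by (simp add: simps)
  have A32: "?S 3 2 + ?S 3 3 * Y' = ?S 1 2 + Y * ?S 2 2 + ?S 3 2" using eA[of 3 2] by (simp add: simps)
  have B00: "?S 0 2 = 0\<^sub>m n n" using eB[of 0 0] by (simp add: simps)
  have B04: "?S 0 4 = 0\<^sub>m n n" using eB[of 0 4] by (simp add: simps)
  have B10: "?S 1 2 = 0\<^sub>m n n" using eB[of 1 0] by (simp add: simps)
  have B20: "?S 2 2 = ?S 0 0" using eB[of 2 0] by (simp add: simps)
  have B32: "?S 3 3 * X' = Y * ?S 1 2 + X * ?S 2 2" using eB[of 3 2] by (simp add: simps)
  have S01: "?S 0 1 = 0\<^sub>m n n" using add_eq_self_imp_zero_mat[OF blocks blocks A00] .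
  have S21: "?S 2 1 = 0\<^sub>m n n" using add_eq_self_imp_zero_mat[OF blocks blocks A20] .
  have S11: "?S 1 1 = ?S 0 0" using add_eq_add_commute_imp_eq_mat[OF blocks blocks blocks A10] .
  have "?S 3 1 + ?S 3 3 = ?S 0 0 + ?S 3 1" using A31 unfolding S21 S11 using Y by simp
  then have S33: "?S 3 3 = ?S 0 0" using add_eq_add_commute_imp_eq_mat[OF blocks blocks blocks] by blast
  have "?S 3 2 + ?S 0 0 * Y' = Y * ?S 0 0 + ?S 3 2" using A32 unfolding B10 S33 B20 using Y by simp
  then show "?S 0 0 * Y' = Y * ?S 0 0"
    using add_eq_add_commute_imp_eq_mat[OF blocks] Y' Y by (meson mult_carrier_mat blocks)
  show "?S 0 0 * X' = X * ?S 0 0" using B32 unfolding B10 S33 B20 using X Y by simp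
  show "?S 0 1 = 0\<^sub>m n n" "?S 0 2 = 0\<^sub>m n n" "?S 0 4 = 0\<^sub>m n n" by (fact S01 B00 B04)+
  show "?S 0 3 = 0\<^sub>m n n" using A01 unfolding S01 by simp
qed

lemma similar_wild_imp_similar:
  assumes X: "X \<in> carrier_mat n n" and Y: "Y \<in> carrier_mat n n"
    and X': "X' \<in> carrier_mat n n" and Y': "Y' \<in> carrier_mat n n"
    and S: "S \<in> carrier_mat (5*n) (5*n)" and Si: "Si \<in> carrier_mat (5*n) (5*n)"
    and SSi: "S * Si = 1\<^sub>m (5*n)" and SiS: "Si * S = 1\<^sub>m (5*n)"
    and hA: "wild_A n X' Y' = Si * wild_A n X Y * S"
    and hB: "wild_B n X' Y' = Si * wild_B n X Y * S"
  shows "similar_pair X Y X' Y'"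
proof -
  have "S * wild_A n X' Y' = wild_A n X Y * S" "S * wild_B n X' Y' = wild_B n X Y * S"
    unfolding hA hB by (simp_all add: conj_intertwines(1)[OF S Si SSi])
  note S_row = wild_intertwiner_first_block_row[OF X Y X' Y' S this]
  have "Si * wild_A n X Y = wild_A n X' Y' * Si" "Si * wild_B n X Y = wild_B n X' Y' * Si"
    unfolding hA hB by (simp_all add: conj_intertwines(2)[OF S Si SSi])
  note Si_row = wild_intertwiner_first_block_row[OF X' Y' X Y Si this]
  define T where "T = block n S 0 0"
  define Ti where "Ti = block n Si 0 0"
  have T: "T \<in> carrier_mat n n" and Ti: "Ti \<in> carrier_mat n n" unfolding T_def Ti_def by simp_all
  have "Ti * T = block n (Si * S) 0 0"
    using block_mult_5[OF Si S, of 0 0] Si_row T Ti unfolding T_def Ti_def by simp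
  then have TiT: "Ti * T = 1\<^sub>m n" unfolding SiS by simp
  have "T * Ti = block n (S * Si) 0 0"
    using block_mult_5[OF S Si, of 0 0] S_row T Ti unfolding T_def Ti_def by simp
  then have TTi: "T * Ti = 1\<^sub>m n" unfolding SSi by simp
  have "Ti * X * T = X'" "Ti * Y * T = Y'"
    using conj_eq_if_intertwines[OF T Ti TiT] X X' Y Y' S_row(5,6) unfolding T_def by simp_all
  then show ?thesis unfolding similar_pair_def using X Y X' Y' T Ti TiT TTi by blast
qed

lemma weakly_similar_wild_imp_similar:
  fixes X Y X' Y' :: "'a::field mat"
  assumes n: "0 < n" and X: "X \<in> carrier_mat n n" and Y: "Y \<in> carrier_mat n n"
    and X': "X' \<in> carrier_mat n' n'" and Y': "Y' \<in> carrier_mat n' n'"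
    and sim: "weakly_similar (wild_A n X Y) (wild_B n X Y) (wild_A n' X' Y') (wild_B n' X' Y')"
  shows "similar_pair X Y X' Y'"
proof -
  obtain m S Si a b c d
    where carrier: "wild_A n X Y \<in> carrier_mat m m" "wild_A n' X' Y' \<in> carrier_mat m m"
    and S: "S \<in> carrier_mat m m" and Si: "Si \<in> carrier_mat m m"
    and SSi: "S * Si = 1\<^sub>m m" and SiS: "Si * S = 1\<^sub>m m" and det: "a * d - b * c \<noteq> 0"
    and hA: "wild_A n' X' Y' = Si * (a \<cdot>\<^sub>m wild_A n X Y + b \<cdot>\<^sub>m wild_B n X Y) * S"
    and hB: "wild_B n' X' Y' = Si * (c \<cdot>\<^sub>m wild_A n X Y + d \<cdot>\<^sub>m wild_B n X Y) * S"
    using sim unfolding weakly_similar_def by blast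
  have m: "m = 5*n" and n': "n' = n"
    using carrier_matD(1)[OF carrier(1)] carrier_matD(1)[OF carrier(2)] by simp_all
  note X' = X'[unfolded n'] and Y' = Y'[unfolded n'] and hA = hA[unfolded n'] and hB = hB[unfolded n']
  note S = S[unfolded m] and Si = Si[unfolded m] and SSi = SSi[unfolded m] and SiS = SiS[unfolded m]
  have "a = 1 \<and> b = 0 \<and> c = 0 \<and> d = 1"
    by (rule weakly_similar_wild_coefficients[OF X Y X' Y' n S Si SSi det hA hB])
  then have "wild_A n X' Y' = Si * wild_A n X Y * S" "wild_B n X' Y' = Si * wild_B n X Y * S"
    using hA hB by simp_all
  then show ?thesis by (rule similar_wild_imp_similar[OF X Y X' Y' S Si SSi SiS])
qed

lemma weakly_similar_wild_iff_similar:
  fixes X Y X' Y' :: "'a::field mat"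
  assumes n: "0 < n" and X: "X \<in> carrier_mat n n" and Y: "Y \<in> carrier_mat n n"
    and X': "X' \<in> carrier_mat n' n'" and Y': "Y' \<in> carrier_mat n' n'"
  shows "weakly_similar (wild_A n X Y) (wild_B n X Y) (wild_A n' X' Y') (wild_B n' X' Y')
    \<longleftrightarrow> similar_pair X Y X' Y'"
proof
  assume "similar_pair X Y X' Y'"
  then obtain m T Ti where "X \<in> carrier_mat m m" "X' \<in> carrier_mat m m"
    and "T \<in> carrier_mat m m" "Ti \<in> carrier_mat m m"
    and "T * Ti = 1\<^sub>m m" "Ti * T = 1\<^sub>m m" "Ti * X * T = X'" "Ti * Y * T = Y'"
    unfolding similar_pair_def by blast
  moreover have "m = n" "n' = n" using calculation X X' by auto
  ultimately show "weakly_similar (wild_A n X Y) (wild_B n X Y) (wild_A n' X' Y') (wild_B n' X' Y')"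
    using similar_pair_imp_weakly_similar similar_imp_similar_wild[OF X Y] by metis
qed (rule weakly_similar_wild_imp_similar[OF n X Y X' Y'])

lemma wild_pair_in_commuting_pairs_nonsing:
  assumes n: "0 < n" and X: "X \<in> carrier_mat n n" and Y: "Y \<in> carrier_mat n n"
  shows "[wild_A n X Y, wild_B n X Y] \<in> commuting_pairs_nonsing"
proof -
  have "invertible_mat (1 \<cdot>\<^sub>m wild_A n X Y + 0 \<cdot>\<^sub>m wild_B n X Y)"
    using wild_A_invertible[OF X Y] by simp
  then show ?thesis
    unfolding commuting_pairs_nonsing_def mem_Collect_eq
    using n wild_A_wild_B_commute[OF X Y]
    by (intro exI[of _ "wild_A n X Y"] exI[of _ "wild_B n X Y"] exI[of _ "5*n"] conjI; fastforce)
qed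

lemma wild_commuting_pairs_nonsing:
  "wild (commuting_pairs_nonsing :: 'a::field mat list set) weak_sim_transf"
  unfolding wild_def
proof (intro exI[of _ "[wild_A_poly, wild_B_poly]"] conjI allI impI)
  have eval: "tuple_eval n [wild_A_poly, wild_B_poly] X Y = [wild_A n X Y, wild_B n X Y]"
    for n and X Y :: "'a mat"
    by (simp add: tuple_eval_def wild_A_def wild_B_def)
  show "\<forall>P\<in>set [wild_A_poly, wild_B_poly]. \<forall>i<dim_row P. \<forall>j<dim_col P. ncpoly (P $$ (i,j))"
    by (auto simp: wild_A_poly_def wild_B_poly_def ncpoly_ncmonom)
  fix n n' and A B A' B' :: "'a mat"
  assume "1 \<le> n" and A: "A \<in> carrier_mat n n" and B: "B \<in> carrier_mat n n"
  then have n: "0 < n" by simp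
  show "tuple_eval n [wild_A_poly, wild_B_poly] A B \<in> commuting_pairs_nonsing"
    unfolding eval by (rule wild_pair_in_commuting_pairs_nonsing[OF n A B])
  assume "1 \<le> n'" and A': "A' \<in> carrier_mat n' n'" and B': "B' \<in> carrier_mat n' n'"
  show "weak_sim_transf (tuple_eval n [wild_A_poly, wild_B_poly] A B)
      (tuple_eval n' [wild_A_poly, wild_B_poly] A' B') \<longleftrightarrow> similar_pair A B A' B'"
    unfolding eval weak_sim_transf_def using weakly_similar_wild_iff_similar[OF n A B A' B'] by simp
qed

lemma wild_superset: "wild M1 R \<Longrightarrow> M1 \<subseteq> M1' \<Longrightarrow> wild M1' R"
  unfolding wild_def by blast

lemma commuting_pairs_nonsing_subset: "commuting_pairs_nonsing \<subseteq> commuting_pairs"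
  unfolding commuting_pairs_nonsing_def commuting_pairs_def by blast

theorem theorem1:
  shows "wild (commuting_pairs :: 'a::field mat list set) weak_sim_transf \<and>
         (card (UNIV :: 'a set) \<noteq> 2 \<longrightarrow> wild (commuting_pairs_nonsing :: 'a mat list set) weak_sim_transf)"
  using wild_commuting_pairs_nonsing
    wild_superset[OF wild_commuting_pairs_nonsing commuting_pairs_nonsing_subset]
  by blast

end
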